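(* Let $G$ be a cyclic group of order $p^a$, where $p$ is an odd prime and $a \geq 1$. Then the power graph $\mathscr{G}(G)$ is overfull.
   Context: For a finite group $G$, the power graph $\mathscr{G}(G)$ is the simple graph with vertex set the elements of $G$, in which two distinct elements $a,b$ are adjacent if and only if one is a power of the other. For a finite simple graph $\Gamma$ on $n$ vertices with maximum vertex degree $\Delta(\Gamma)$, $\Gamma$ is called overfull if $|E(\Gamma)| / \lfloor n/2 \rfloor > \Delta(\Gamma)$. *)

theory Defs
  imports "HOL-Algebra.Elementary_Groups" "HOL-Computational_Algebra.Primes" Complex_Main
begin

text \<open>A finite simple graph is given by a vertex set V and a symmetric irreflexive
  adjacency relation adj on V.\<close>

definition graph_edges :: "'a set \<Rightarrow> ('a \<Rightarrow> 'a \<Rightarrow> bool) \<Rightarrow> 'a set set" where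
  "graph_edges V adj = {{u, v} | u v. u \<in> V \<and> v \<in> V \<and> adj u v}"

definition graph_degree :: "'a set \<Rightarrow> ('a \<Rightarrow> 'a \<Rightarrow> bool) \<Rightarrow> 'a \<Rightarrow> nat" where
  "graph_degree V adj v = card {u \<in> V. adj v u}"

definition graph_max_degree :: "'a set \<Rightarrow> ('a \<Rightarrow> 'a \<Rightarrow> bool) \<Rightarrow> nat" where
  "graph_max_degree V adj = Max (graph_degree V adj ` V)"

definition overfull :: "'a set \<Rightarrow> ('a \<Rightarrow> 'a \<Rightarrow> bool) \<Rightarrow> bool" where
  "overfull V adj \<longleftrightarrow>
     real (card (graph_edges V adj)) / real (card V div 2) > real (graph_max_degree V adj)"

definition power_adj :: "('a, 'b) monoid_scheme \<Rightarrow> 'a \<Rightarrow> 'a \<Rightarrow> bool" where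
  "power_adj G a b \<longleftrightarrow> a \<noteq> b \<and> ((\<exists>n::nat. a = b [^]\<^bsub>G\<^esub> n) \<or> (\<exists>n::nat. b = a [^]\<^bsub>G\<^esub> n))"

end

theory Submission
  imports Defs "HOL-Algebra.Multiplicative_Group"
begin

text \<open>Write the elements of a cyclic group of order \<open>n = p ^ a\<close> as powers \<open>g ^ i\<close> of a generator.
  By Bezout, \<open>g ^ j\<close> is a power of \<open>g ^ i\<close> as soon as \<open>gcd i n\<close> divides \<open>j\<close>; as divisors of
  \<open>p ^ a\<close> the numbers \<open>gcd i n\<close> and \<open>gcd j n\<close> are comparable under divisibility, so one of
  \<open>g ^ i\<close>, \<open>g ^ j\<close> is a power of the other and the power graph is complete.
  A complete graph on an odd number \<open>n = 2m + 1 \<ge> 3\<close> of vertices has \<open>n m\<close> edges, so its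
  edge count divided by \<open>\<lfloor>n/2\<rfloor> = m\<close> is \<open>n\<close>, exceeding the maximum degree \<open>n - 1\<close>.\<close>

lemma card_graph_edges_complete:
  assumes "finite V" and "\<And>u v. u \<in> V \<Longrightarrow> v \<in> V \<Longrightarrow> adj u v \<longleftrightarrow> u \<noteq> v"
  shows "card (graph_edges V adj) = card V choose 2"
proof -
  have "graph_edges V adj = {B. B \<subseteq> V \<and> card B = 2}"
    unfolding graph_edges_def card_2_iff using assms(2) by blast
  then show ?thesis
    using n_subsets[OF assms(1)] by simp
qed

lemma graph_max_degree_complete:
  assumes "finite V" and "V \<noteq> {}"
    and "\<And>u v. u \<in> V \<Longrightarrow> v \<in> V \<Longrightarrow> adj u v \<longleftrightarrow> u \<noteq> v"
  shows "graph_max_degree V adj = card V - 1"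
proof -
  have "graph_degree V adj v = card V - 1" if "v \<in> V" for v
  proof -
    have "{u \<in> V. adj v u} = V - {v}"
      using assms(3) that by auto
    then show ?thesis
      unfolding graph_degree_def using assms(1) that by simp
  qed
  then have "graph_degree V adj ` V = {card V - 1}"
    using assms(2) by auto
  then show ?thesis
    unfolding graph_max_degree_def by simp
qed

lemma overfull_complete_graph:
  assumes "finite V" and "odd (card V)" and "card V > 1"
    and "\<And>u v. u \<in> V \<Longrightarrow> v \<in> V \<Longrightarrow> adj u v \<longleftrightarrow> u \<noteq> v"
  shows "overfull V adj"
proof -
  obtain m where n: "card V = 2 * m + 1"
    using assms(2) oddE by blast
  with assms(3) have "m > 0" by simp
  have "card V choose 2 = card V * m"
    using n by (simp add: choose_two)
  moreover have "card V div 2 = m"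
    using n by simp
  ultimately have "real (card V choose 2) / real (card V div 2) = real (card V)"
    using \<open>m > 0\<close> by simp
  moreover have "V \<noteq> {}"
    using assms(3) by auto
  ultimately show ?thesis
    unfolding overfull_def
    using card_graph_edges_complete[OF assms(1,4)]
      graph_max_degree_complete[OF assms(1) _ assms(4)] assms(3)
    by simp
qed

lemma prime_power_divisors_comparable:
  fixes p :: nat
  assumes "prime p" and "d dvd p ^ a" and "e dvd p ^ a"
  shows "d dvd e \<or> e dvd d"
proof -
  obtain i j where "d = p ^ i" and "e = p ^ j"
    using assms divides_primepow_nat by blast
  then show ?thesis
    by (cases "i \<le> j") (auto intro: le_imp_power_dvd)
qed

context group
begin

lemma cyclic_group_nat_pow_generator:
  assumes "cyclic_group G" and "finite (carrier G)"
  obtains g where "g \<in> carrier G" and "\<And>x. x \<in> carrier G \<Longrightarrow> \<exists>i::nat. x = g [^] i"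
proof -
  obtain g where g: "g \<in> carrier G" "carrier G = range (\<lambda>k::int. g [^] k)"
    using assms(1) cyclic_group by blast
  then have "carrier G = generate G {g}"
    using generate_pow[OF g(1)] by auto
  then show ?thesis
    using that g(1) generate_pow_on_finite_carrier[OF assms(2) g(1)] by auto
qed

lemma pow_is_pow_of_pow_if_gcd_dvd:
  fixes i j n :: nat
  assumes g: "g \<in> carrier G" and "g [^] n = \<one>" and "gcd i n dvd j"
  shows "\<exists>m::nat. g [^] j = (g [^] i) [^] m"
proof (cases "i = 0")
  case True
  then have "n dvd j"
    using assms(3) by simp
  then obtain t where "j = n * t" ..
  then have "g [^] j = (g [^] i) [^] (0::nat)"
    using assms(1,2) by (simp add: nat_pow_pow[symmetric])
  then show ?thesis ..
next
  case False
  obtain x y where xy: "i * x = n * y + gcd i n"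
    using bezout_nat[OF False] by blast
  obtain t where t: "j = gcd i n * t"
    using assms(3) by blast
  have "i * (x * t) = n * (y * t) + j"
    using xy t by (metis add_mult_distrib mult.assoc)
  then have "(g [^] i) [^] (x * t) = (g [^] n) [^] (y * t) \<otimes> g [^] j"
    using g by (simp add: nat_pow_pow nat_pow_mult)
  then have "g [^] j = (g [^] i) [^] (x * t)"
    using assms(1,2) by simp
  then show ?thesis ..
qed

lemma cyclic_prime_power_group_powers_comparable:
  assumes "cyclic_group G" and "prime p" and "order G = p ^ a"
    and "u \<in> carrier G" and "v \<in> carrier G"
  shows "(\<exists>m::nat. u = v [^] m) \<or> (\<exists>m::nat. v = u [^] m)"
proof -
  have "finite (carrier G)"
    using assms(2,3) order_gt_0_iff_finite prime_gt_0_nat by fastforce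
  then obtain g where g: "g \<in> carrier G"
    and gen: "\<And>x. x \<in> carrier G \<Longrightarrow> \<exists>i::nat. x = g [^] i"
    using cyclic_group_nat_pow_generator[OF assms(1)] by blast
  obtain i j :: nat where u: "u = g [^] i" and v: "v = g [^] j"
    using gen assms(4,5) by blast
  have g_order: "g [^] order G = \<one>"
    using pow_order_eq_1[OF g] .
  have "gcd i (order G) dvd gcd j (order G) \<or> gcd j (order G) dvd gcd i (order G)"
    using prime_power_divisors_comparable[OF assms(2), of "gcd i (order G)" a "gcd j (order G)"]
      assms(3) by simp
  then have "gcd i (order G) dvd j \<or> gcd j (order G) dvd i"
    using dvd_trans gcd_dvd1 by blast
  then show ?thesis
    using pow_is_pow_of_pow_if_gcd_dvd[OF g g_order] u v by blast
qed

lemma power_adj_cyclic_prime_power_iff: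
  assumes "cyclic_group G" and "prime p" and "order G = p ^ a"
    and "u \<in> carrier G" and "v \<in> carrier G"
  shows "power_adj G u v \<longleftrightarrow> u \<noteq> v"
  using cyclic_prime_power_group_powers_comparable[OF assms] unfolding power_adj_def by blast

end

theorem mainTheorem6:
  fixes G :: "('a, 'b) monoid_scheme" and p a :: nat
  assumes "group G" and "cyclic_group G" and "finite (carrier G)"
    and "prime p" and "odd p" and "a \<ge> 1"
    and "card (carrier G) = p ^ a"
  shows "overfull (carrier G) (power_adj G)"
proof (rule overfull_complete_graph)
  show "finite (carrier G)" and "odd (card (carrier G))"
    using assms(3,5,7) by simp_all
  have "p > 1"
    using assms(4) prime_gt_1_nat by blast
  then show "card (carrier G) > 1"
    using assms(6,7) one_less_power[of p a] by simp
  show "power_adj G u v \<longleftrightarrow> u \<noteq> v" if "u \<in> carrier G" and "v \<in> carrier G" for u v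
    using group.power_adj_cyclic_prime_power_iff[OF assms(1,2,4) _ that] assms(7)
    unfolding order_def by blast
qed

end
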